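(* Let $\{a_n\}_{n\ge0}$ be a real-valued sequence with $\{a_n\}\in GMS$. The following are equivalent: (i) The series $\sum_{n=0}^\infty a_n$ converges. (ii) The partial sums $\sum_{n=0}^N a_n\cos(nx)$ converge uniformly in $x\in\mathbb{R}$ as $N\to\infty$. (iii) The series $\sum_{n=0}^\infty a_n\cos(nx)$ converges for every $x\in\mathbb{R}$ and its sum is a bounded function of $x$.
   Context: A complex sequence $\{a_n\}_{n\ge0}$ tending to $0$ is general monotone, written $\{a_n\}\in GMS$, if there exist constants $C>1$ and $\lambda>1$ such that for every $n\in\mathbb{N}$, $$\sum_{k=n}^{2n}|a_k-a_{k+1}|\le C\sum_{n/\lambda\le k\le\lambda n}\frac{|a_k|}{k}.$$ *)

theory Defs
  imports "HOL-Analysis.Analysis"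
begin

text \<open>The sequence is indexed from 0 and tends to 0;
  the inequality is required for every n \<ge> 1 (n \<in> \<nat> = {1,2,...}; for n = 0 the
  right-hand side would involve |a_0|/0).\<close>

definition GMS :: "(nat \<Rightarrow> 'a::real_normed_vector) \<Rightarrow> bool" where
  "GMS a \<longleftrightarrow> a \<longlonglongrightarrow> 0 \<and>
     (\<exists>C::real. C > 1 \<and> (\<exists>L::real. L > 1 \<and>
        (\<forall>n::nat. n \<ge> 1 \<longrightarrow>
           (\<Sum>k\<in>{n..2*n}. norm (a k - a (Suc k)))
             \<le> C * (\<Sum>k\<in>{k::nat. real n / L \<le> real k \<and> real k \<le> L * real n}. norm (a k) / real k))))"

end

theory Submission
  imports Defs
begin

text \<open>
  Only (i) \<Longrightarrow> (ii) uses the GMS condition. By Abel summation, a tail of the cosine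
  series is split at k \<approx> 1/|sin(x/2)|: below the split it is controlled by the small
  partial sums of \<Sum>a_k, since cos(kx) changes by at most 2|sin(x/2)| per step; above it,
  by the bounded Dirichlet sums, provided the variation \<Sum>_{k \<ge> P} |a_k - a_{k+1}| is
  O(1/P). This is where GMS enters. The GMS inequality bounds the variation over [n,2n]
  by block sums \<Sum>_{m \<le> k < 2m} |a_k| at comparable scales m, while a block sum is at most
  a small partial-sum term plus a multiple of the variation. Together these give a
  recursion whose iteration shows that the block sums are bounded; hence the variation
  over [n,2n] is O(1/n), and summing over dyadic blocks gives the O(1/P) tail.
\<close>

lemma sum_atLeastLessThan_by_parts:
  fixes f g :: "nat \<Rightarrow> 'a::comm_ring_1"
  shows "(\<Sum>n\<in>{p..<r}. f n * g n) = (\<Sum>k\<in>{p..<r}. f k) * g r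
          + (\<Sum>n\<in>{p..<r}. (\<Sum>k\<in>{p..<Suc n}. f k) * (g n - g (Suc n)))"
proof (induction r)
  case 0
  then show ?case by simp
next
  case (Suc r)
  show ?case
  proof (cases "p \<le> r")
    case True
    have "(\<Sum>n\<in>{p..<Suc r}. f n * g n) = (\<Sum>n\<in>{p..<r}. f n * g n) + f r * g r"
      and "(\<Sum>k\<in>{p..<Suc r}. f k) = (\<Sum>k\<in>{p..<r}. f k) + f r"
      and "(\<Sum>n\<in>{p..<Suc r}. (\<Sum>k\<in>{p..<Suc n}. f k) * (g n - g (Suc n)))
         = (\<Sum>n\<in>{p..<r}. (\<Sum>k\<in>{p..<Suc n}. f k) * (g n - g (Suc n)))
           + (\<Sum>k\<in>{p..<Suc r}. f k) * (g r - g (Suc r))"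
      using True by (simp_all add: sum.atLeastLessThan_Suc)
    then show ?thesis
      unfolding Suc.IH by (simp add: algebra_simps)
  qed simp
qed

lemma abs_sum_by_parts_le:
  fixes f g :: "nat \<Rightarrow> real"
  assumes partial: "\<And>n. p \<le> n \<Longrightarrow> n \<le> r \<Longrightarrow> \<bar>\<Sum>k\<in>{p..<n}. f k\<bar> \<le> B" and "0 \<le> B"
  shows "\<bar>\<Sum>n\<in>{p..<r}. f n * g n\<bar> \<le> B * \<bar>g r\<bar> + B * (\<Sum>n\<in>{p..<r}. \<bar>g n - g (Suc n)\<bar>)"
proof (cases "p \<le> r")
  case True
  have "\<bar>\<Sum>n\<in>{p..<r}. f n * g n\<bar> \<le> \<bar>(\<Sum>k\<in>{p..<r}. f k) * g r\<bar>
          + (\<Sum>n\<in>{p..<r}. \<bar>(\<Sum>k\<in>{p..<Suc n}. f k) * (g n - g (Suc n))\<bar>)"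
    unfolding sum_atLeastLessThan_by_parts[of f g]
    by (rule order.trans[OF abs_triangle_ineq add_left_mono[OF sum_abs]])
  also have "\<bar>(\<Sum>k\<in>{p..<r}. f k) * g r\<bar> \<le> B * \<bar>g r\<bar>"
    unfolding abs_mult using True partial[of r] by (intro mult_right_mono) auto
  also have "(\<Sum>n\<in>{p..<r}. \<bar>(\<Sum>k\<in>{p..<Suc n}. f k) * (g n - g (Suc n))\<bar>)
      \<le> (\<Sum>n\<in>{p..<r}. B * \<bar>g n - g (Suc n)\<bar>)"
  proof (rule sum_mono)
    fix n
    assume "n \<in> {p..<r}"
    then have "\<bar>\<Sum>k\<in>{p..<Suc n}. f k\<bar> \<le> B"
      by (intro partial) auto
    then show "\<bar>(\<Sum>k\<in>{p..<Suc n}. f k) * (g n - g (Suc n))\<bar> \<le> B * \<bar>g n - g (Suc n)\<bar>"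
      unfolding abs_mult by (rule mult_right_mono) simp
  qed
  finally show ?thesis
    by (simp add: sum_distrib_left)
qed (use \<open>0 \<le> B\<close> in simp)

lemma abs_diff_le_variation:
  fixes a :: "nat \<Rightarrow> real"
  assumes "i \<le> j"
  shows "\<bar>a i - a j\<bar> \<le> (\<Sum>k\<in>{i..<j}. \<bar>a k - a (Suc k)\<bar>)"
proof -
  have "a i - a j = (\<Sum>k\<in>{i..<j}. a k - a (Suc k))"
    using sum_Suc_diff'[OF assms, of a] by (simp add: sum_subtractf)
  then show ?thesis
    by (metis sum_abs)
qed

lemma abs_diff_le_variation_on:
  fixes a :: "nat \<Rightarrow> real"
  assumes "i \<in> {p..<q}" "j \<in> {p..<q}"
  shows "\<bar>a i - a j\<bar> \<le> (\<Sum>k\<in>{p..<q}. \<bar>a k - a (Suc k)\<bar>)"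
proof -
  have "\<bar>a i - a j\<bar> \<le> (\<Sum>k\<in>{min i j..<max i j}. \<bar>a k - a (Suc k)\<bar>)"
    using abs_diff_le_variation[of "min i j" "max i j" a]
    by (cases "i \<le> j") (auto simp: abs_minus_commute min_def max_def)
  also have "\<dots> \<le> (\<Sum>k\<in>{p..<q}. \<bar>a k - a (Suc k)\<bar>)"
    using assms by (intro sum_mono2) auto
  finally show ?thesis .
qed

lemma sum_abs_le_abs_sum_add_variation:
  fixes a :: "nat \<Rightarrow> real"
  shows "(\<Sum>k\<in>{p..<q}. \<bar>a k\<bar>)
           \<le> \<bar>\<Sum>k\<in>{p..<q}. a k\<bar> + real (q - p) * (\<Sum>k\<in>{p..<q}. \<bar>a k - a (Suc k)\<bar>)"
proof -
  let ?I = "{p..<q}" and ?V = "\<Sum>k\<in>{p..<q}. \<bar>a k - a (Suc k)\<bar>"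
  have "0 \<le> ?V"
    by (intro sum_nonneg) auto
  consider (pos) "\<forall>k\<in>?I. 0 < a k" | (neg) "\<forall>k\<in>?I. a k < 0"
    | (change) i j where "i \<in> ?I" "a i \<le> 0" "j \<in> ?I" "0 \<le> a j"
    by force
  then show ?thesis
  proof cases
    case pos
    then have "(\<Sum>k\<in>?I. \<bar>a k\<bar>) = (\<Sum>k\<in>?I. a k)" and "0 \<le> (\<Sum>k\<in>?I. a k)"
      by (auto intro!: sum.cong intro: sum_nonneg less_imp_le)
    then show ?thesis
      using \<open>0 \<le> ?V\<close> by simp
  next
    case neg
    then have "(\<Sum>k\<in>?I. \<bar>a k\<bar>) = - (\<Sum>k\<in>?I. a k)" and "(\<Sum>k\<in>?I. a k) \<le> 0"
      by (auto simp: sum_negf[symmetric] intro!: sum.cong intro: sum_nonpos less_imp_le)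
    then show ?thesis
      using \<open>0 \<le> ?V\<close> by simp
  next
    case change
    \<comment> \<open>If the sequence changes sign on the interval, every term is dominated by the variation.\<close>
    have "\<bar>a k\<bar> \<le> ?V" if "k \<in> ?I" for k
      using abs_diff_le_variation_on[OF that change(1), of a]
        abs_diff_le_variation_on[OF that change(3), of a] change by linarith
    then have "(\<Sum>k\<in>?I. \<bar>a k\<bar>) \<le> real (q - p) * ?V"
      using sum_bounded_above[of ?I "\<lambda>k. \<bar>a k\<bar>" ?V] by simp
    then show ?thesis
      by linarith
  qed
qed

lemma sum_abs_le_by_chunks:
  fixes a :: "nat \<Rightarrow> real"
  assumes "1 \<le> t" and partial: "\<And>p' q'. p0 \<le> p' \<Longrightarrow> \<bar>\<Sum>k\<in>{p'..<q'}. a k\<bar> \<le> \<epsilon>"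
    and "p0 \<le> p"
  shows "(\<Sum>k\<in>{p..<q}. \<bar>a k\<bar>)
           \<le> (real ((q - p) div t) + 1) * \<epsilon> + real t * (\<Sum>k\<in>{p..<q}. \<bar>a k - a (Suc k)\<bar>)"
  using \<open>p0 \<le> p\<close>
proof (induction "q - p" arbitrary: p rule: less_induct)
  case less
  let ?V = "\<lambda>p q. \<Sum>k\<in>{p..<q}. \<bar>a k - a (Suc k)\<bar>"
  have "0 \<le> \<epsilon>"
    using partial[of p0 p0] by simp
  have chunk: "(\<Sum>k\<in>{p..<q'}. \<bar>a k\<bar>) \<le> \<epsilon> + real t * ?V p q'" if "q' - p \<le> t" for q'
  proof -
    have "real (q' - p) * ?V p q' \<le> real t * ?V p q'"
      using that by (intro mult_right_mono) (auto intro: sum_nonneg)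
    then show ?thesis
      using sum_abs_le_abs_sum_add_variation[of a p q'] partial[OF less.prems, of q'] by linarith
  qed
  show ?case
  proof (cases "q - p \<le> t")
    case True
    have "0 \<le> real ((q - p) div t) * \<epsilon>"
      using \<open>0 \<le> \<epsilon>\<close> by simp
    then show ?thesis
      using chunk[OF True] by (simp add: distrib_right)
  next
    case False
    let ?m = "p + t"
    have "p \<le> ?m" "?m \<le> q"
      using False by auto
    have IH: "(\<Sum>k\<in>{?m..<q}. \<bar>a k\<bar>) \<le> (real ((q - ?m) div t) + 1) * \<epsilon> + real t * ?V ?m q"
      using less.hyps[of ?m] less.prems \<open>1 \<le> t\<close> False by auto
    have "(q - p) div t = (q - ?m) div t + 1"
      using False \<open>1 \<le> t\<close> by (simp add: le_div_geq)
    moreover have "(\<Sum>k\<in>{p..<q}. \<bar>a k\<bar>) = (\<Sum>k\<in>{p..<?m}. \<bar>a k\<bar>) + (\<Sum>k\<in>{?m..<q}. \<bar>a k\<bar>)"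
      and "?V p q = ?V p ?m + ?V ?m q"
      using \<open>p \<le> ?m\<close> \<open>?m \<le> q\<close> by (simp_all add: sum.atLeastLessThan_concat)
    ultimately show ?thesis
      using IH chunk[of ?m] by (simp add: algebra_simps)
  qed
qed

lemma abs_le_variation_bound:
  fixes a :: "nat \<Rightarrow> real"
  assumes "a \<longlonglongrightarrow> 0" and variation: "\<And>Q. (\<Sum>k\<in>{q..<Q}. \<bar>a k - a (Suc k)\<bar>) \<le> B"
  shows "\<bar>a q\<bar> \<le> B"
proof (rule LIMSEQ_le_const2)
  show "(\<lambda>Q. \<bar>a q - a Q\<bar>) \<longlonglongrightarrow> \<bar>a q\<bar>"
    using tendsto_rabs[OF tendsto_diff[OF tendsto_const assms(1)]] by simp
  show "\<exists>N. \<forall>Q\<ge>N. \<bar>a q - a Q\<bar> \<le> B"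
    using abs_diff_le_variation variation order_trans by blast
qed

lemma sum_dyadic_blocks:
  fixes f :: "nat \<Rightarrow> 'a::comm_monoid_add"
  shows "(\<Sum>k\<in>{m..<2^R*m}. f k) = (\<Sum>i<R. \<Sum>k\<in>{2^i*m..<2^Suc i*m}. f k)"
proof (induction R)
  case (Suc R)
  have "(\<Sum>k\<in>{m..<2^Suc R*m}. f k) = (\<Sum>k\<in>{m..<2^R*m}. f k) + (\<Sum>k\<in>{2^R*m..<2^Suc R*m}. f k)"
    by (rule sum.atLeastLessThan_concat[symmetric]) auto
  then show ?case
    using Suc by simp
qed simp

lemma sum_le_of_dyadic_block_bounds:
  fixes f :: "nat \<Rightarrow> real"
  assumes nonneg: "\<And>k. 0 \<le> f k" and "0 \<le> K"
    and block: "\<And>m. N \<le> m \<Longrightarrow> (\<Sum>k\<in>{m..<2*m}. f k) \<le> K / real m"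
    and "1 \<le> N" "N \<le> P"
  shows "(\<Sum>k\<in>{P..<Q}. f k) \<le> 2 * K / real P"
proof -
  have "Q \<le> 2^Q * P"
    using \<open>1 \<le> N\<close> \<open>N \<le> P\<close> less_exp[of Q] by (metis less_imp_le_nat mult_le_mono2 mult_1_right le_trans)
  then have "(\<Sum>k\<in>{P..<Q}. f k) \<le> (\<Sum>k\<in>{P..<2^Q*P}. f k)"
    using nonneg by (intro sum_mono2) auto
  also have "\<dots> = (\<Sum>i<Q. \<Sum>k\<in>{2^i*P..<2^Suc i*P}. f k)"
    by (rule sum_dyadic_blocks)
  also have "\<dots> \<le> (\<Sum>i<Q. K / real P * (1/2)^i)"
  proof (rule sum_mono)
    fix i
    have "N \<le> 2^i * P"
      using \<open>N \<le> P\<close> by (metis le_trans mult_le_mono1 one_le_numeral one_le_power mult_1)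
    then have "(\<Sum>k\<in>{2^i*P..<2^Suc i*P}. f k) \<le> K / real (2^i*P)"
      using block[of "2^i*P"] by (simp add: mult.assoc)
    also have "\<dots> = K / real P * (1/2)^i"
      by (simp add: power_one_over field_simps)
    finally show "(\<Sum>k\<in>{2^i*P..<2^Suc i*P}. f k) \<le> K / real P * (1/2)^i" .
  qed
  also have "\<dots> = K / real P * (\<Sum>i<Q. (1/2::real)^i)"
    by (simp add: sum_distrib_left)
  also have "\<dots> \<le> K / real P * 2"
    using \<open>0 \<le> K\<close> by (intro mult_left_mono) (auto simp: sum_gp_strict)
  finally show ?thesis
    by (simp add: ac_simps)
qed

lemma sum_window_le_dyadic_range:
  fixes f :: "nat \<Rightarrow> real"
  assumes nonneg: "\<And>k. 0 \<le> f k" and "1 < L" "L^2 < 2^R" "1 \<le> n"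
  shows "(\<Sum>k\<in>{k. real n / L \<le> real k \<and> real k \<le> L * real n}. f k / real k)
           \<le> L / real n * (\<Sum>k\<in>{nat \<lceil>real n / L\<rceil>..<2^R * nat \<lceil>real n / L\<rceil>}. f k)"
proof -
  define m where "m = nat \<lceil>real n / L\<rceil>"
  define W where "W = {k::nat. real n / L \<le> real k \<and> real k \<le> L * real n}"
  have "0 < real n"
    using \<open>1 \<le> n\<close> by simp
  have W: "m \<le> k" "k < 2^R * m" "1 / real k \<le> L / real n" if "k \<in> W" for k
  proof -
    from that have k1: "real n / L \<le> real k" and k2: "real k \<le> L * real n"
      unfolding W_def by auto
    show "m \<le> k"
      unfolding m_def using k1 by (simp add: ceiling_le nat_le_iff)
    have "L * real n = L^2 * (real n / L)"
      using \<open>1 < L\<close> by (simp add: power2_eq_square)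
    also have "\<dots> < 2^R * (real n / L)"
      using \<open>L^2 < 2^R\<close> \<open>0 < real n\<close> \<open>1 < L\<close> by (intro mult_strict_right_mono) auto
    also have "\<dots> \<le> 2^R * real m"
      unfolding m_def by (intro mult_left_mono real_nat_ceiling_ge) auto
    finally have "real k < real (2^R * m)"
      using k2 by simp
    then show "k < 2^R * m"
      by (simp only: of_nat_less_iff)
    have "0 < real n / L"
      using \<open>0 < real n\<close> \<open>1 < L\<close> by simp
    then have "0 < real k"
      using k1 by linarith
    then show "1 / real k \<le> L / real n"
      using k1 \<open>0 < real n\<close> \<open>1 < L\<close> by (simp add: field_simps)
  qed
  have "(\<Sum>k\<in>W. f k / real k) \<le> (\<Sum>k\<in>W. L / real n * f k)"
  proof (rule sum_mono)
    fix k
    assume "k \<in> W"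
    then show "f k / real k \<le> L / real n * f k"
      using mult_right_mono[OF W(3) nonneg, of k k] by simp
  qed
  also have "\<dots> \<le> L / real n * (\<Sum>k\<in>{m..<2^R * m}. f k)"
    unfolding sum_distrib_left[symmetric] using W(1,2) nonneg \<open>1 < L\<close>
    by (intro mult_left_mono sum_mono2) auto
  finally show ?thesis
    unfolding W_def m_def .
qed

lemma GMS_variation_le_blocks:
  fixes a :: "nat \<Rightarrow> real"
  assumes "GMS a"
  obtains c L R where "0 \<le> c" "1 < L"
    "\<And>n. 1 \<le> n \<Longrightarrow> (\<Sum>k\<in>{n..2*n}. \<bar>a k - a (Suc k)\<bar>)
       \<le> c / real n * (\<Sum>i<R. \<Sum>k\<in>{2^i * nat \<lceil>real n / L\<rceil>..<2 * (2^i * nat \<lceil>real n / L\<rceil>)}. \<bar>a k\<bar>)"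
proof -
  from assms obtain C L where "1 < C" "1 < L" and GMS_ineq: "\<And>n. 1 \<le> n \<Longrightarrow>
      (\<Sum>k\<in>{n..2*n}. \<bar>a k - a (Suc k)\<bar>)
        \<le> C * (\<Sum>k\<in>{k. real n / L \<le> real k \<and> real k \<le> L * real n}. \<bar>a k\<bar> / real k)"
    unfolding GMS_def real_norm_def by blast
  obtain R :: nat where "L^2 < 2^R"
    using real_arch_pow[of 2 "L^2"] by auto
  show ?thesis
  proof (rule that[of "C * L" L R])
    fix n :: nat
    assume "1 \<le> n"
    have "(\<Sum>k\<in>{n..2*n}. \<bar>a k - a (Suc k)\<bar>)
        \<le> C * (L / real n * (\<Sum>k\<in>{nat \<lceil>real n / L\<rceil>..<2^R * nat \<lceil>real n / L\<rceil>}. \<bar>a k\<bar>))"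
      using GMS_ineq[OF \<open>1 \<le> n\<close>]
    proof (rule order_trans)
      show "C * (\<Sum>k\<in>{k. real n / L \<le> real k \<and> real k \<le> L * real n}. \<bar>a k\<bar> / real k)
          \<le> C * (L / real n * (\<Sum>k\<in>{nat \<lceil>real n / L\<rceil>..<2^R * nat \<lceil>real n / L\<rceil>}. \<bar>a k\<bar>))"
        using sum_window_le_dyadic_range[of "\<lambda>k. \<bar>a k\<bar>" L R n] \<open>1 < C\<close> \<open>1 < L\<close> \<open>L^2 < 2^R\<close> \<open>1 \<le> n\<close>
        by (intro mult_left_mono) auto
    qed
    then show "(\<Sum>k\<in>{n..2*n}. \<bar>a k - a (Suc k)\<bar>)
       \<le> C * L / real n * (\<Sum>i<R. \<Sum>k\<in>{2^i * nat \<lceil>real n / L\<rceil>..<2 * (2^i * nat \<lceil>real n / L\<rceil>)}. \<bar>a k\<bar>)"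
      unfolding sum_dyadic_blocks[of "\<lambda>k. \<bar>a k\<bar>"] by (simp add: mult.assoc)
  qed (use \<open>1 < C\<close> \<open>1 < L\<close> in auto)
qed

lemma le_nat_ceiling_divide:
  assumes "nat \<lceil>L * real N\<rceil> \<le> m" and "0 < L"
  shows "N \<le> nat \<lceil>real m / L\<rceil>"
proof -
  have "L * real N \<le> real m"
    using assms(1) real_nat_ceiling_ge[of "L * real N"] by linarith
  then have "real N \<le> real m / L"
    using \<open>0 < L\<close> by (simp add: field_simps)
  then show ?thesis
    by (simp add: le_nat_iff le_ceiling_iff)
qed

lemma nat_ceiling_divide_le:
  assumes "1 \<le> L"
  shows "nat \<lceil>real n / L\<rceil> \<le> n"
proof -
  have "real n / L \<le> real n"
    using assms mult_right_mono[of 1 L "real n"] by (simp add: field_simps)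
  then show ?thesis
    by (simp add: nat_le_iff ceiling_le)
qed

lemma le_of_chunk_bounds:
  fixes \<phi> v c S :: real and n D :: nat
  assumes "1 \<le> D" "2 * D \<le> n" "0 \<le> v"
    and chunks: "\<And>t. 1 \<le> t \<Longrightarrow> \<phi> \<le> real (n div t) + 1 + real t * v"
    and window: "v \<le> c / real n * S"
  shows "\<phi> \<le> 2 * real D + 1 + c / real D * S"
proof -
  define t where "t = n div D"
  have "1 \<le> t"
    unfolding t_def using assms(1,2) by (simp add: Suc_le_eq div_greater_zero_iff)
  have "n = D * t + n mod D" "n mod D < D" "D * 1 \<le> D * t"
    unfolding t_def using \<open>1 \<le> D\<close> \<open>1 \<le> t\<close> by (simp_all add: t_def)
  then have "n < 2 * D * t"
    unfolding mult.assoc by linarith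
  then have "n div t \<le> 2 * D"
    using less_mult_imp_div_less[of n "2 * D" t] by simp
  have "0 < real n" "0 < real D"
    using assms(1,2) by auto
  have "real t * real D \<le> real n"
    unfolding t_def using div_times_less_eq_dividend[of n D] by (metis of_nat_le_iff of_nat_mult)
  then have "real t * v \<le> real n / real D * v"
    using \<open>0 < real D\<close> \<open>0 \<le> v\<close> by (intro mult_right_mono) (auto simp: field_simps)
  also have "\<dots> \<le> real n / real D * (c / real n * S)"
    using window \<open>0 < real n\<close> \<open>0 < real D\<close> by (intro mult_left_mono) auto
  also have "\<dots> = c / real D * S"
    using \<open>0 < real n\<close> by simp
  finally show ?thesis
    using chunks[OF \<open>1 \<le> t\<close>] \<open>n div t \<le> 2 * D\<close> by linarith
qed

lemma le_of_halving_bounds: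
  fixes \<phi> :: "nat \<Rightarrow> real"
  assumes base: "\<And>m. N \<le> m \<Longrightarrow> \<phi> m \<le> G + B * real m"
    and step: "\<And>j. (\<And>m. N \<le> m \<Longrightarrow> \<phi> m \<le> G + B * real m / 2^j)
      \<Longrightarrow> (\<And>m. N \<le> m \<Longrightarrow> \<phi> m \<le> G + B * real m / 2^Suc j)"
    and "N \<le> m"
  shows "\<phi> m \<le> G"
proof -
  have halving: "\<phi> m \<le> G + B * real m / 2^j" if "N \<le> m" for m j
    using that
  proof (induction j arbitrary: m)
    case 0
    then show ?case
      using base by simp
  next
    case (Suc j)
    show ?case
      by (rule step[OF Suc.IH Suc.prems])
  qed
  have "(\<lambda>j. G + B * real m / 2^j) \<longlonglongrightarrow> G"
    using tendsto_add[OF tendsto_const LIMSEQ_divide_realpow_zero[of 2 "B * real m"], of G] by simp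
  then show ?thesis
    by (rule LIMSEQ_le_const) (use halving[OF \<open>N \<le> m\<close>] in auto)
qed

lemma block_recursion_step:
  fixes \<phi> :: "nat \<Rightarrow> real" and g :: "nat \<Rightarrow> nat"
  assumes recursion: "\<phi> n \<le> A + \<delta> * (\<Sum>i<R. \<phi> (g i))"
    and "0 \<le> \<delta>" "\<delta> * real R * 2^R \<le> 1/2" "0 \<le> B" "0 \<le> G" "A \<le> G / 2"
    and range: "\<And>i. i < R \<Longrightarrow> N \<le> g i \<and> g i \<le> 2^R * n"
    and bound: "\<And>m. N \<le> m \<Longrightarrow> \<phi> m \<le> G + B * real m / 2^j"
  shows "\<phi> n \<le> G + B * real n / 2^Suc j"
proof -
  define y where "y = B * real n / 2^j"
  have "0 \<le> y"
    unfolding y_def using \<open>0 \<le> B\<close> by simp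
  have "\<delta> * real R * 1 \<le> \<delta> * real R * 2^R"
    using \<open>0 \<le> \<delta>\<close> by (intro mult_left_mono) auto
  then have "\<delta> * real R \<le> 1/2"
    using \<open>\<delta> * real R * 2^R \<le> 1/2\<close> by linarith
  have "\<phi> (g i) \<le> G + 2^R * y" if "i < R" for i
  proof -
    have "real (g i) \<le> real (2^R * n)"
      using range[OF that] by (simp only: of_nat_le_iff)
    then have "B * real (g i) / 2^j \<le> B * (2^R * real n) / 2^j"
      using \<open>0 \<le> B\<close> by (intro divide_right_mono mult_left_mono) auto
    then show ?thesis
      using bound[of "g i"] range[OF that] unfolding y_def by (simp add: ac_simps)
  qed
  then have "(\<Sum>i<R. \<phi> (g i)) \<le> real R * (G + 2^R * y)"
    using sum_bounded_above[of "{..<R}" "\<lambda>i. \<phi> (g i)"] by simp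
  then have "\<delta> * (\<Sum>i<R. \<phi> (g i)) \<le> \<delta> * (real R * (G + 2^R * y))"
    using \<open>0 \<le> \<delta>\<close> by (rule mult_left_mono)
  also have "\<dots> = \<delta> * real R * G + \<delta> * real R * 2^R * y"
    by (simp add: algebra_simps)
  also have "\<dots> \<le> G / 2 + y / 2"
    using mult_right_mono[OF \<open>\<delta> * real R \<le> 1/2\<close> \<open>0 \<le> G\<close>]
      mult_right_mono[OF \<open>\<delta> * real R * 2^R \<le> 1/2\<close> \<open>0 \<le> y\<close>] by simp
  finally show ?thesis
    using recursion \<open>A \<le> G / 2\<close> unfolding y_def by simp
qed

lemma bounded_of_block_recursion:
  fixes \<phi> :: "nat \<Rightarrow> real" and g :: "nat \<Rightarrow> nat \<Rightarrow> nat"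
  assumes linear: "\<And>m. \<phi> m \<le> B * real m" and "0 \<le> B"
    and recursion: "\<And>n. M \<le> n \<Longrightarrow> \<phi> n \<le> A + \<delta> * (\<Sum>i<R. \<phi> (g n i))"
    and "0 \<le> \<delta>" "\<delta> * real R * 2^R \<le> 1/2"
    and range: "\<And>n i. M \<le> n \<Longrightarrow> i < R \<Longrightarrow> N \<le> g n i \<and> g n i \<le> 2^R * n"
  obtains G where "\<And>m. N \<le> m \<Longrightarrow> \<phi> m \<le> G"
proof
  define G where "G = max (2 * A) (real M * B)"
  have "A \<le> G / 2" "real M * B \<le> G"
    unfolding G_def by auto
  moreover have "0 \<le> real M * B"
    using \<open>0 \<le> B\<close> by simp
  ultimately have "0 \<le> G"
    by linarith
  fix m
  assume "N \<le> m"
  \<comment> \<open>Each round of the recursion halves the linear part of the a priori bound.\<close>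
  show "\<phi> m \<le> G"
  proof (rule le_of_halving_bounds[OF _ _ \<open>N \<le> m\<close>])
    show "\<phi> m \<le> G + B * real m" for m
      using linear[of m] \<open>0 \<le> G\<close> by simp
    show "\<phi> n \<le> G + B * real n / 2^Suc j"
      if bound: "\<And>m. N \<le> m \<Longrightarrow> \<phi> m \<le> G + B * real m / 2^j" and "N \<le> n" for j n
    proof (cases "M \<le> n")
      case True
      show ?thesis
        by (rule block_recursion_step[OF recursion[OF True] \<open>0 \<le> \<delta>\<close> \<open>\<delta> * real R * 2^R \<le> 1/2\<close>
              \<open>0 \<le> B\<close> \<open>0 \<le> G\<close> \<open>A \<le> G / 2\<close> range[OF True] bound])
    next
      case False
      then have "B * real n \<le> real M * B"
        using \<open>0 \<le> B\<close> by (simp add: mult.commute mult_left_mono)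
      moreover have "0 \<le> B * real n / 2^Suc j"
        using \<open>0 \<le> B\<close> by simp
      ultimately show ?thesis
        using linear[of n] \<open>real M * B \<le> G\<close> by linarith
    qed
  qed
qed

lemma GMS_block_recursion:
  fixes a :: "nat \<Rightarrow> real"
  assumes blocks: "\<And>n. 1 \<le> n \<Longrightarrow> (\<Sum>k\<in>{n..2*n}. \<bar>a k - a (Suc k)\<bar>)
       \<le> c / real n * (\<Sum>i<R. \<Sum>k\<in>{2^i * nat \<lceil>real n / L\<rceil>..<2 * (2^i * nat \<lceil>real n / L\<rceil>)}. \<bar>a k\<bar>)"
    and partial: "\<And>p q. N \<le> p \<Longrightarrow> \<bar>\<Sum>k\<in>{p..<q}. a k\<bar> \<le> 1"
    and "1 < L" "1 \<le> D" "2 * D + nat \<lceil>L * real N\<rceil> \<le> n"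
  shows "(\<Sum>k\<in>{n..<2*n}. \<bar>a k\<bar>) \<le> 2 * real D + 1
      + c / real D * (\<Sum>i<R. \<Sum>k\<in>{2^i * nat \<lceil>real n / L\<rceil>..<2 * (2^i * nat \<lceil>real n / L\<rceil>)}. \<bar>a k\<bar>)"
proof (rule le_of_chunk_bounds)
  show "1 \<le> D" "2 * D \<le> n"
    using assms(4,5) by auto
  then show "(\<Sum>k\<in>{n..2*n}. \<bar>a k - a (Suc k)\<bar>)
      \<le> c / real n * (\<Sum>i<R. \<Sum>k\<in>{2^i * nat \<lceil>real n / L\<rceil>..<2 * (2^i * nat \<lceil>real n / L\<rceil>)}. \<bar>a k\<bar>)"
    by (intro blocks) simp
  show "0 \<le> (\<Sum>k\<in>{n..2*n}. \<bar>a k - a (Suc k)\<bar>)"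
    by (intro sum_nonneg) auto
  show "(\<Sum>k\<in>{n..<2*n}. \<bar>a k\<bar>) \<le> real (n div t) + 1 + real t * (\<Sum>k\<in>{n..2*n}. \<bar>a k - a (Suc k)\<bar>)"
    if "1 \<le> t" for t
  proof -
    have "nat \<lceil>L * real N\<rceil> \<le> n"
      using assms(5) by linarith
    then have "N \<le> nat \<lceil>real n / L\<rceil>"
      by (rule le_nat_ceiling_divide) (use \<open>1 < L\<close> in simp)
    moreover have "nat \<lceil>real n / L\<rceil> \<le> n"
      by (rule nat_ceiling_divide_le) (use \<open>1 < L\<close> in simp)
    ultimately have "N \<le> n"
      by linarith
    have "real t * (\<Sum>k\<in>{n..<2*n}. \<bar>a k - a (Suc k)\<bar>) \<le> real t * (\<Sum>k\<in>{n..2*n}. \<bar>a k - a (Suc k)\<bar>)"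
      by (intro mult_left_mono sum_mono2) auto
    then show ?thesis
      using sum_abs_le_by_chunks[OF that partial \<open>N \<le> n\<close>, of "2*n"] by simp
  qed
qed

lemma GMS_summable_block_bound:
  fixes a :: "nat \<Rightarrow> real"
  assumes "GMS a" and "summable a"
  obtains G N where "\<And>m. N \<le> m \<Longrightarrow> (\<Sum>k\<in>{m..<2*m}. \<bar>a k\<bar>) \<le> G"
proof -
  obtain c L R where "0 \<le> c" "1 < L" and blocks: "\<And>n. 1 \<le> n \<Longrightarrow> (\<Sum>k\<in>{n..2*n}. \<bar>a k - a (Suc k)\<bar>)
       \<le> c / real n * (\<Sum>i<R. \<Sum>k\<in>{2^i * nat \<lceil>real n / L\<rceil>..<2 * (2^i * nat \<lceil>real n / L\<rceil>)}. \<bar>a k\<bar>)"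
    using GMS_variation_le_blocks[OF \<open>GMS a\<close>] by blast
  have "Bseq a"
    using \<open>GMS a\<close> convergent_imp_Bseq convergent_def unfolding GMS_def by blast
  then obtain B where "0 < B" and B: "\<And>k. \<bar>a k\<bar> \<le> B"
    by (metis BseqE real_norm_def)
  obtain N where partial: "\<And>p q. N \<le> p \<Longrightarrow> \<bar>\<Sum>k\<in>{p..<q}. a k\<bar> \<le> 1"
    using \<open>summable a\<close> unfolding summable_Cauchy by (metis real_norm_def zero_less_one less_imp_le)
  define D where "D = nat \<lceil>c * real R * 2^Suc R\<rceil> + 1"
  have "1 \<le> D" "c * real R * 2^Suc R \<le> real D"
    unfolding D_def using real_nat_ceiling_ge[of "c * real R * 2^Suc R"] by auto
  show ?thesis
  proof (rule bounded_of_block_recursion[where \<phi> = "\<lambda>m. \<Sum>k\<in>{m..<2*m}. \<bar>a k\<bar>"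
        and g = "\<lambda>n i. 2^i * nat \<lceil>real n / L\<rceil>" and M = "2 * D + nat \<lceil>L * real N\<rceil>"
        and A = "2 * real D + 1" and \<delta> = "c / real D" and R = R and N = N])
    show "(\<Sum>k\<in>{m..<2*m}. \<bar>a k\<bar>) \<le> B * real m" for m
      using sum_bounded_above[of "{m..<2*m}" "\<lambda>k. \<bar>a k\<bar>" B] B by (simp add: mult.commute)
    show "0 \<le> B" "0 \<le> c / real D"
      using \<open>0 < B\<close> \<open>0 \<le> c\<close> by auto
    show "c / real D * real R * 2^R \<le> 1/2"
      using \<open>c * real R * 2^Suc R \<le> real D\<close> \<open>1 \<le> D\<close> by (simp add: field_simps)
    show "N \<le> 2^i * nat \<lceil>real n / L\<rceil> \<and> 2^i * nat \<lceil>real n / L\<rceil> \<le> 2^R * n"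
      if "2 * D + nat \<lceil>L * real N\<rceil> \<le> n" "i < R" for n i
    proof
      have "nat \<lceil>L * real N\<rceil> \<le> n"
        using that(1) by linarith
      then have "N \<le> nat \<lceil>real n / L\<rceil>"
        by (rule le_nat_ceiling_divide) (use \<open>1 < L\<close> in simp)
      moreover have "1 * nat \<lceil>real n / L\<rceil> \<le> 2^i * nat \<lceil>real n / L\<rceil>"
        by (intro mult_le_mono1) simp
      ultimately show "N \<le> 2^i * nat \<lceil>real n / L\<rceil>"
        by linarith
      have "nat \<lceil>real n / L\<rceil> \<le> n"
        by (rule nat_ceiling_divide_le) (use \<open>1 < L\<close> in simp)
      then show "2^i * nat \<lceil>real n / L\<rceil> \<le> 2^R * n"
        using that(2) by (intro mult_le_mono power_increasing) auto
    qed
    show "(\<Sum>k\<in>{n..<2*n}. \<bar>a k\<bar>) \<le> 2 * real D + 1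
        + c / real D * (\<Sum>i<R. \<Sum>k\<in>{2^i * nat \<lceil>real n / L\<rceil>..<2 * (2^i * nat \<lceil>real n / L\<rceil>)}. \<bar>a k\<bar>)"
      if "2 * D + nat \<lceil>L * real N\<rceil> \<le> n" for n
      by (rule GMS_block_recursion[OF blocks partial \<open>1 < L\<close> \<open>1 \<le> D\<close> that])
  qed (rule that)
qed

lemma GMS_summable_variation_tail:
  fixes a :: "nat \<Rightarrow> real"
  assumes "GMS a" and "summable a"
  obtains \<Lambda> N where "0 < \<Lambda>" "1 \<le> N"
    "\<And>P Q. N \<le> P \<Longrightarrow> (\<Sum>k\<in>{P..<Q}. \<bar>a k - a (Suc k)\<bar>) \<le> \<Lambda> / real P"
proof -
  obtain G N0 where G: "\<And>m. N0 \<le> m \<Longrightarrow> (\<Sum>k\<in>{m..<2*m}. \<bar>a k\<bar>) \<le> G"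
    using GMS_summable_block_bound[OF assms] by blast
  obtain c L R where "0 \<le> c" "1 < L" and blocks: "\<And>n. 1 \<le> n \<Longrightarrow> (\<Sum>k\<in>{n..2*n}. \<bar>a k - a (Suc k)\<bar>)
       \<le> c / real n * (\<Sum>i<R. \<Sum>k\<in>{2^i * nat \<lceil>real n / L\<rceil>..<2 * (2^i * nat \<lceil>real n / L\<rceil>)}. \<bar>a k\<bar>)"
    using GMS_variation_le_blocks[OF \<open>GMS a\<close>] by blast
  define N where "N = nat \<lceil>L * real N0\<rceil> + 1"
  have "0 \<le> (\<Sum>k\<in>{N0..<2*N0}. \<bar>a k\<bar>)"
    by (intro sum_nonneg) auto
  then have "0 \<le> G"
    using G[of N0] by linarith
  have block_variation: "(\<Sum>k\<in>{m..<2*m}. \<bar>a k - a (Suc k)\<bar>) \<le> c * real R * G / real m"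
    if "N \<le> m" for m
  proof -
    have "1 \<le> m" "nat \<lceil>L * real N0\<rceil> \<le> m"
      using that unfolding N_def by linarith+
    have "N0 \<le> nat \<lceil>real m / L\<rceil>"
      using \<open>1 < L\<close> by (intro le_nat_ceiling_divide[OF \<open>nat \<lceil>L * real N0\<rceil> \<le> m\<close>]) auto
    have "(\<Sum>k\<in>{2^i * nat \<lceil>real m / L\<rceil>..<2 * (2^i * nat \<lceil>real m / L\<rceil>)}. \<bar>a k\<bar>) \<le> G" for i
    proof (rule G)
      have "1 * nat \<lceil>real m / L\<rceil> \<le> 2^i * nat \<lceil>real m / L\<rceil>"
        by (intro mult_le_mono1) simp
      then show "N0 \<le> 2^i * nat \<lceil>real m / L\<rceil>"
        using \<open>N0 \<le> nat \<lceil>real m / L\<rceil>\<close> by linarith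
    qed
    then have "(\<Sum>i<R. \<Sum>k\<in>{2^i * nat \<lceil>real m / L\<rceil>..<2 * (2^i * nat \<lceil>real m / L\<rceil>)}. \<bar>a k\<bar>) \<le> real R * G"
      using sum_bounded_above[of "{..<R}" _ G] by simp
    then have "c / real m * (\<Sum>i<R. \<Sum>k\<in>{2^i * nat \<lceil>real m / L\<rceil>..<2 * (2^i * nat \<lceil>real m / L\<rceil>)}. \<bar>a k\<bar>)
        \<le> c / real m * (real R * G)"
      using \<open>0 \<le> c\<close> by (intro mult_left_mono) auto
    moreover have "(\<Sum>k\<in>{m..<2*m}. \<bar>a k - a (Suc k)\<bar>) \<le> (\<Sum>k\<in>{m..2*m}. \<bar>a k - a (Suc k)\<bar>)"
      by (intro sum_mono2) auto
    ultimately show ?thesis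
      using blocks[OF \<open>1 \<le> m\<close>] by (simp add: mult.assoc)
  qed
  have "0 \<le> c * real R * G"
    using \<open>0 \<le> c\<close> \<open>0 \<le> G\<close> by simp
  show ?thesis
  proof (rule that[of "2 * (c * real R * G) + 1" N])
    fix P Q
    assume "N \<le> P"
    have "(\<Sum>k\<in>{P..<Q}. \<bar>a k - a (Suc k)\<bar>) \<le> 2 * (c * real R * G) / real P"
      using block_variation \<open>N \<le> P\<close> \<open>0 \<le> c\<close> \<open>0 \<le> G\<close>
      by (intro sum_le_of_dyadic_block_bounds[where N = N]) (auto simp: N_def)
    also have "\<dots> \<le> (2 * (c * real R * G) + 1) / real P"
      by (intro divide_right_mono) auto
    finally show "(\<Sum>k\<in>{P..<Q}. \<bar>a k - a (Suc k)\<bar>) \<le> (2 * (c * real R * G) + 1) / real P" .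
  qed (use \<open>0 \<le> c * real R * G\<close> in \<open>auto simp: N_def\<close>)
qed

lemma abs_cos_Suc_diff_le: "\<bar>cos (real (Suc n) * x) - cos (real n * x)\<bar> \<le> 2 * \<bar>sin (x / 2)\<bar>"
proof -
  have "cos (real (Suc n) * x) - cos (real n * x)
      = 2 * sin ((real (Suc n) * x + real n * x) / 2) * sin ((real n * x - real (Suc n) * x) / 2)"
    by (rule cos_diff_cos)
  also have "(real n * x - real (Suc n) * x) / 2 = - (x / 2)"
    by (simp add: algebra_simps)
  finally have "\<bar>cos (real (Suc n) * x) - cos (real n * x)\<bar>
      = 2 * \<bar>sin ((real (Suc n) * x + real n * x) / 2)\<bar> * \<bar>sin (x / 2)\<bar>"
    by (simp add: abs_mult)
  also have "\<dots> \<le> 2 * 1 * \<bar>sin (x / 2)\<bar>"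
    by (intro mult_right_mono mult_left_mono) auto
  finally show ?thesis
    by simp
qed

lemma abs_sin_half_mult_sum_cos_le:
  assumes "r \<le> n"
  shows "\<bar>sin (x / 2)\<bar> * \<bar>\<Sum>k\<in>{r..<n}. cos (real k * x)\<bar> \<le> 1"
proof -
  define h where "h k = sin ((real k - 1/2) * x)" for k :: nat
  have telescope: "2 * sin (x / 2) * cos (real k * x) = h (Suc k) - h k" for k
  proof -
    have "h (Suc k) = sin (real k * x + x / 2)" "h k = sin (real k * x - x / 2)"
      unfolding h_def by (simp_all add: algebra_simps)
    then show ?thesis
      unfolding sin_add sin_diff by algebra
  qed
  have "2 * sin (x / 2) * (\<Sum>k\<in>{r..<n}. cos (real k * x)) = h n - h r"
    unfolding sum_distrib_left telescope by (rule sum_Suc_diff'[OF assms])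
  moreover have "\<bar>h n - h r\<bar> \<le> 2"
    using abs_sin_le_one[of "(real n - 1/2) * x"] abs_sin_le_one[of "(real r - 1/2) * x"]
    unfolding h_def by linarith
  ultimately show ?thesis
    by (simp add: abs_mult)
qed

lemma abs_sum_cos_le_of_partial_sums:
  fixes a :: "nat \<Rightarrow> real"
  assumes partial: "\<And>q. \<bar>\<Sum>k\<in>{p..<q}. a k\<bar> \<le> \<epsilon>"
  shows "\<bar>\<Sum>k\<in>{p..<r}. a k * cos (real k * x)\<bar> \<le> \<epsilon> * (1 + 2 * real (r - p) * \<bar>sin (x / 2)\<bar>)"
proof -
  have "0 \<le> \<epsilon>"
    using partial[of p] by simp
  have "(\<Sum>n\<in>{p..<r}. \<bar>cos (real n * x) - cos (real (Suc n) * x)\<bar>) \<le> real (r - p) * (2 * \<bar>sin (x / 2)\<bar>)"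
    using sum_bounded_above[of "{p..<r}" _ "2 * \<bar>sin (x / 2)\<bar>"] abs_cos_Suc_diff_le
    by (simp add: abs_minus_commute)
  then have "\<epsilon> * (\<Sum>n\<in>{p..<r}. \<bar>cos (real n * x) - cos (real (Suc n) * x)\<bar>)
      \<le> \<epsilon> * (2 * real (r - p) * \<bar>sin (x / 2)\<bar>)"
    using \<open>0 \<le> \<epsilon>\<close> by (intro mult_left_mono) auto
  moreover have "\<epsilon> * \<bar>cos (real r * x)\<bar> \<le> \<epsilon>"
    using \<open>0 \<le> \<epsilon>\<close> mult_left_mono[of "\<bar>cos (real r * x)\<bar>" 1 \<epsilon>] by simp
  ultimately show ?thesis
    using abs_sum_by_parts_le[of p r a \<epsilon> "\<lambda>k. cos (real k * x)"] partial \<open>0 \<le> \<epsilon>\<close>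
    by (simp add: distrib_left)
qed

lemma abs_sum_cos_le_of_variation:
  fixes a :: "nat \<Rightarrow> real"
  assumes "r \<le> q"
  shows "\<bar>sin (x / 2)\<bar> * \<bar>\<Sum>k\<in>{r..<q}. a k * cos (real k * x)\<bar>
           \<le> \<bar>a q\<bar> + (\<Sum>k\<in>{r..<q}. \<bar>a k - a (Suc k)\<bar>)"
proof (cases "sin (x / 2) = 0")
  case False
  define s where "s = \<bar>sin (x / 2)\<bar>"
  have "0 < s"
    using False by (simp add: s_def)
  have "\<bar>\<Sum>k\<in>{r..<n}. cos (real k * x)\<bar> \<le> 1 / s" if "r \<le> n" for n
    using abs_sin_half_mult_sum_cos_le[OF that, of x] \<open>0 < s\<close> by (simp add: s_def field_simps)
  then have "\<bar>\<Sum>k\<in>{r..<q}. cos (real k * x) * a k\<bar> \<le> 1 / s * \<bar>a q\<bar> + 1 / s * (\<Sum>k\<in>{r..<q}. \<bar>a k - a (Suc k)\<bar>)"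
    using \<open>0 < s\<close> by (intro abs_sum_by_parts_le) auto
  then show ?thesis
    using \<open>0 < s\<close> by (simp add: s_def mult.commute field_simps)
qed (auto intro: add_nonneg_nonneg sum_nonneg)

lemma abs_sum_cos_le_of_scaled_variation:
  fixes a :: "nat \<Rightarrow> real"
  assumes "a \<longlonglongrightarrow> 0" "r \<le> q" "0 < M" "M \<le> \<bar>sin (x / 2)\<bar> * real r"
    and variation: "\<And>P Q. r \<le> P \<Longrightarrow> (\<Sum>k\<in>{P..<Q}. \<bar>a k - a (Suc k)\<bar>) \<le> \<Lambda> / real P"
  shows "\<bar>\<Sum>k\<in>{r..<q}. a k * cos (real k * x)\<bar> \<le> 2 * \<Lambda> / M"
proof -
  define s where "s = \<bar>sin (x / 2)\<bar>"
  have "0 < s * real r"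
    using assms(3,4) unfolding s_def by linarith
  then have "0 < s" "0 < real r"
    unfolding s_def by (simp_all add: zero_less_mult_iff)
  then have "0 \<le> \<Lambda>"
    using variation[of r r] by (simp add: zero_le_divide_iff)
  have "\<bar>a q\<bar> \<le> \<Lambda> / real q"
    using abs_le_variation_bound[OF \<open>a \<longlonglongrightarrow> 0\<close> variation] \<open>r \<le> q\<close> by simp
  also have "\<dots> \<le> \<Lambda> / real r"
    using \<open>0 \<le> \<Lambda>\<close> \<open>0 < real r\<close> \<open>r \<le> q\<close> by (intro divide_left_mono) auto
  finally have "s * \<bar>\<Sum>k\<in>{r..<q}. a k * cos (real k * x)\<bar> \<le> 2 * \<Lambda> / real r"
    using abs_sum_cos_le_of_variation[OF \<open>r \<le> q\<close>, of x a] variation[of r q]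
    unfolding s_def by linarith
  then have "\<bar>\<Sum>k\<in>{r..<q}. a k * cos (real k * x)\<bar> \<le> 2 * \<Lambda> / (s * real r)"
    using \<open>0 < s\<close> \<open>0 < real r\<close> by (simp add: field_simps)
  also have "\<dots> \<le> 2 * \<Lambda> / M"
    using assms(3,4) \<open>0 \<le> \<Lambda>\<close> unfolding s_def by (intro divide_left_mono) auto
  finally show ?thesis .
qed

lemma split_index_for_scale:
  fixes s M :: real
  assumes "0 \<le> s" "s \<le> 1" "0 < M"
  obtains r where "p \<le> r" "r \<le> max p q" "real (r - p) * s \<le> M + 1" "r < q \<Longrightarrow> M \<le> s * real r"
proof (cases "s = 0")
  case True
  then show ?thesis
    using \<open>0 < M\<close> by (intro that[of "max p q"]) auto
next
  case False
  then have "0 < s"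
    using \<open>0 \<le> s\<close> by simp
  define c where "c = nat \<lceil>M / s\<rceil>"
  have "real c = of_int \<lceil>M / s\<rceil>"
    unfolding c_def using \<open>0 < M\<close> \<open>0 < s\<close> by simp
  then have "M / s \<le> real c" "real c < M / s + 1"
    using ceiling_correct[of "M / s"] by linarith+
  then have "M \<le> s * real c" "real c * s < M + s"
    using \<open>0 < s\<close> by (simp_all add: field_simps)
  show ?thesis
  proof (rule that[of "min (max p q) (max p c)"])
    have "real (min (max p q) (max p c) - p) * s \<le> real c * s"
      using \<open>0 < s\<close> by (intro mult_right_mono) auto
    then show "real (min (max p q) (max p c) - p) * s \<le> M + 1"
      using \<open>real c * s < M + s\<close> \<open>s \<le> 1\<close> by linarith
    show "M \<le> s * real (min (max p q) (max p c))" if "min (max p q) (max p c) < q"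
    proof -
      have "min (max p q) (max p c) = max p c"
        using that by (auto simp: min_def)
      then have "s * real c \<le> s * real (min (max p q) (max p c))"
        using \<open>0 < s\<close> by (intro mult_left_mono) auto
      then show ?thesis
        using \<open>M \<le> s * real c\<close> by linarith
    qed
  qed auto
qed

lemma abs_sum_cos_tail_le:
  fixes a :: "nat \<Rightarrow> real"
  assumes partial: "\<And>q'. \<bar>\<Sum>k\<in>{p..<q'}. a k\<bar> \<le> \<epsilon>"
    and variation: "\<And>P Q. p \<le> P \<Longrightarrow> (\<Sum>k\<in>{P..<Q}. \<bar>a k - a (Suc k)\<bar>) \<le> \<Lambda> / real P"
    and "a \<longlonglongrightarrow> 0" "1 \<le> p" "0 < M"
  shows "\<bar>\<Sum>k\<in>{p..<q}. a k * cos (real k * x)\<bar> \<le> \<epsilon> * (3 + 2 * M) + 2 * \<Lambda> / M"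
proof -
  define s where "s = \<bar>sin (x / 2)\<bar>"
  have "0 \<le> \<epsilon>" "0 \<le> \<Lambda>"
    using partial[of p] variation[of p p] \<open>1 \<le> p\<close> by (auto simp: zero_le_divide_iff)
  obtain r where "p \<le> r" "r \<le> max p q" "real (r - p) * s \<le> M + 1" and far: "r < q \<Longrightarrow> M \<le> s * real r"
    using split_index_for_scale[of s M p q] \<open>0 < M\<close> unfolding s_def by auto
  show ?thesis
  proof (cases "p \<le> q")
    case True
    then have "r \<le> q"
      using \<open>r \<le> max p q\<close> by simp
    have "\<epsilon> * (1 + 2 * real (r - p) * s) \<le> \<epsilon> * (3 + 2 * M)"
      using \<open>real (r - p) * s \<le> M + 1\<close> \<open>0 \<le> \<epsilon>\<close> by (intro mult_left_mono) auto
    then have low: "\<bar>\<Sum>k\<in>{p..<r}. a k * cos (real k * x)\<bar> \<le> \<epsilon> * (3 + 2 * M)"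
      using abs_sum_cos_le_of_partial_sums[OF partial, where r = r and x = x] unfolding s_def by linarith
    have high: "\<bar>\<Sum>k\<in>{r..<q}. a k * cos (real k * x)\<bar> \<le> 2 * \<Lambda> / M"
    proof (cases "r < q")
      case True
      show ?thesis
        using far[OF True] \<open>p \<le> r\<close> \<open>r \<le> q\<close> \<open>a \<longlonglongrightarrow> 0\<close> \<open>0 < M\<close> variation
        unfolding s_def by (intro abs_sum_cos_le_of_scaled_variation) auto
    qed (use \<open>r \<le> q\<close> \<open>0 \<le> \<Lambda>\<close> \<open>0 < M\<close> in simp)
    have "(\<Sum>k\<in>{p..<q}. a k * cos (real k * x))
        = (\<Sum>k\<in>{p..<r}. a k * cos (real k * x)) + (\<Sum>k\<in>{r..<q}. a k * cos (real k * x))"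
      using \<open>p \<le> r\<close> \<open>r \<le> q\<close> by (simp add: sum.atLeastLessThan_concat)
    then show ?thesis
      using low high abs_triangle_ineq[of "\<Sum>k\<in>{p..<r}. a k * cos (real k * x)"
          "\<Sum>k\<in>{r..<q}. a k * cos (real k * x)"] by linarith
  qed (use \<open>0 \<le> \<epsilon>\<close> \<open>0 \<le> \<Lambda>\<close> \<open>0 < M\<close> in simp)
qed

lemma GMS_summable_imp_uniformly_convergent_cos:
  fixes a :: "nat \<Rightarrow> real"
  assumes "GMS a" and "summable a"
  shows "uniformly_convergent_on UNIV (\<lambda>N x. \<Sum>n\<le>N. a n * cos (real n * x))"
proof -
  have "a \<longlonglongrightarrow> 0"
    using \<open>GMS a\<close> unfolding GMS_def by blast
  obtain \<Lambda> N where "0 < \<Lambda>" "1 \<le> N"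
    and variation: "\<And>P Q. N \<le> P \<Longrightarrow> (\<Sum>k\<in>{P..<Q}. \<bar>a k - a (Suc k)\<bar>) \<le> \<Lambda> / real P"
    using GMS_summable_variation_tail[OF assms] by blast
  show ?thesis
    unfolding uniformly_convergent_eq_Cauchy
  proof (rule uniformly_Cauchy_onI')
    fix e :: real
    assume "0 < e"
    define M where "M = 4 * \<Lambda> / e"
    define \<epsilon> where "\<epsilon> = e / (4 * (3 + 2 * M))"
    have "0 < M"
      unfolding M_def using \<open>0 < e\<close> \<open>0 < \<Lambda>\<close> by simp
    then have "0 < \<epsilon>"
      unfolding \<epsilon>_def using \<open>0 < e\<close> by simp
    have "\<epsilon> * (3 + 2 * M) = e / 4"
      unfolding \<epsilon>_def using \<open>0 < M\<close> by (simp add: field_simps)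
    have "2 * \<Lambda> / M = e / 2"
      unfolding M_def using \<open>0 < e\<close> \<open>0 < \<Lambda>\<close> by (simp add: field_simps)
    obtain N0 where N0: "\<And>m n. N0 \<le> m \<Longrightarrow> \<bar>\<Sum>k\<in>{m..<n}. a k\<bar> < \<epsilon>"
      using \<open>summable a\<close> \<open>0 < \<epsilon>\<close> unfolding summable_Cauchy by (metis real_norm_def)
    show "\<exists>M. \<forall>x\<in>UNIV. \<forall>m\<ge>M. \<forall>n>m. dist (\<Sum>k\<le>m. a k * cos (real k * x)) (\<Sum>k\<le>n. a k * cos (real k * x)) < e"
    proof (intro exI ballI allI impI)
      fix x :: real and m n :: nat
      assume "max N0 N \<le> m" "m < n"
      have "(\<Sum>k\<le>n. a k * cos (real k * x)) - (\<Sum>k\<le>m. a k * cos (real k * x))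
          = (\<Sum>k\<in>{Suc m..<Suc n}. a k * cos (real k * x))"
        using sum_diff_nat_ivl[of 0 "Suc m" "Suc n" "\<lambda>k. a k * cos (real k * x)"] \<open>m < n\<close>
        by (simp add: atLeast0LessThan lessThan_Suc_atMost)
      also have "\<bar>\<dots>\<bar> \<le> \<epsilon> * (3 + 2 * M) + 2 * \<Lambda> / M"
        using \<open>max N0 N \<le> m\<close> \<open>1 \<le> N\<close> \<open>0 < M\<close> N0 variation \<open>a \<longlonglongrightarrow> 0\<close>
        by (intro abs_sum_cos_tail_le) (auto intro: less_imp_le)
      finally show "dist (\<Sum>k\<le>m. a k * cos (real k * x)) (\<Sum>k\<le>n. a k * cos (real k * x)) < e"
        using \<open>\<epsilon> * (3 + 2 * M) = e / 4\<close> \<open>2 * \<Lambda> / M = e / 2\<close> \<open>0 < e\<close>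
        by (simp add: dist_real_def abs_minus_commute)
    qed
  qed
qed

lemma uniformly_convergent_cos_imp_summable_bounded:
  fixes a :: "nat \<Rightarrow> real"
  assumes "uniformly_convergent_on UNIV (\<lambda>N x. \<Sum>n\<le>N. a n * cos (real n * x))"
  shows "(\<forall>x. summable (\<lambda>n. a n * cos (real n * x)))
    \<and> bounded (range (\<lambda>x. \<Sum>n. a n * cos (real n * x)))"
proof -
  obtain l where l: "uniform_limit UNIV (\<lambda>N x. \<Sum>n\<le>N. a n * cos (real n * x)) l sequentially"
    using assms unfolding uniformly_convergent_on_def by blast
  have sums: "(\<lambda>n. a n * cos (real n * x)) sums l x" for x
    unfolding sums_def_le using tendsto_uniform_limitI[OF l, of x] by simp
  have "bounded (range (\<lambda>x. \<Sum>n\<le>N. a n * cos (real n * x)))" for N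
  proof -
    have "\<bar>\<Sum>n\<le>N. a n * cos (real n * x)\<bar> \<le> (\<Sum>n\<le>N. \<bar>a n\<bar>)" for x
      by (rule order_trans[OF sum_abs sum_mono]) (simp add: abs_mult mult_left_le)
    then show ?thesis
      unfolding bounded_iff by auto
  qed
  then have "bounded (range l)"
    by (intro uniform_limit_bounded[OF l]) auto
  moreover have "(\<lambda>x. \<Sum>n. a n * cos (real n * x)) = l"
    using sums by (simp add: sums_iff)
  ultimately show ?thesis
    using sums summable_def by blast
qed

theorem theorem3:
  fixes a :: "nat \<Rightarrow> real"
  assumes "GMS a"
  shows "(summable a \<longleftrightarrow>
           uniformly_convergent_on UNIV (\<lambda>N x. \<Sum>n\<le>N. a n * cos (real n * x)))
       \<and> (uniformly_convergent_on UNIV (\<lambda>N x. \<Sum>n\<le>N. a n * cos (real n * x)) \<longleftrightarrow>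
           ((\<forall>x::real. summable (\<lambda>n. a n * cos (real n * x))) \<and>
            bounded (range (\<lambda>x::real. \<Sum>n. a n * cos (real n * x)))))"
proof -
  have at_zero: "(\<forall>x::real. summable (\<lambda>n. a n * cos (real n * x))) \<Longrightarrow> summable a"
    by (drule spec[of _ 0]) simp
  show ?thesis
    using GMS_summable_imp_uniformly_convergent_cos[OF assms]
      uniformly_convergent_cos_imp_summable_bounded[of a] at_zero by blast
qed

end
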